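(* Let $Q$ be a $d$-dimensional prismatoid with parallel bases $Q^+$ and $Q^-$, and let $G^+$ and $G^-$ be the geodesic maps on the sphere $S^{d-2}$ obtained by intersecting with $S^{d-2}$ the normal fans of $Q^+$ and $Q^-$ respectively. Then the following are equivalent: (1) One can go from the facet $Q^+$ to the facet $Q^-$ of $Q$ in at most $d$ steps. (2) In the common refinement of $G^+$ and $G^-$ (obtained by superimposing them), one can go from a vertex of $G^+$ to a vertex of $G^-$ traversing at most $d-2$ edges of the common refinement.
   Context: A polytope is a bounded convex polyhedron; facets are faces of codimension one and ridges are faces of codimension two. A step from one facet of $Q$ to another consists of moving between two facets sharing a ridge; "going from $Q^+$ to $Q^-$ in at most $d$ steps" means there is a sequence of at most $d$ such steps starting at $Q^+$ and ending at $Q^-$. A prismatoid is a polytope $Q$ all of whose vertices lie in the union of two facets $Q^+,Q^-$, called its bases; here the bases are assumed to lie in parallel hyperplanes, both identified with $\mathbb{R}^{d-1}$. The normal fan of a $(d-1)$-polytope $P\subset\mathbb{R}^{d-1}$ is the complex of polyhedral cones in $(\mathbb{R}^{d-1})^*$ formed by the outer normal cones of the faces of $P$ (the normal cone at a point $x$ of $P$ is the set of linear functionals whose maximum on $P$ is attained at $x$). Intersecting it with the unit sphere $S^{d-2}$ yields a geodesic map, i.e. a cell decomposition of $S^{d-2}$ in which every cell is an intersection of hemispheres. The common refinement of two such maps is the cell decomposition whose cells are the nonempty intersections of a cell of $G^+$ with a cell of $G^-$. *)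

theory Defs
  imports "HOL-Analysis.Analysis"
begin

definition ridge_of :: "'a::euclidean_space set \<Rightarrow> 'a set \<Rightarrow> bool" where
  "ridge_of R Q \<longleftrightarrow> R face_of Q \<and> R \<noteq> {} \<and> aff_dim R = aff_dim Q - 2"

definition prismatoid ::
  "'a::euclidean_space set \<Rightarrow> 'a set \<Rightarrow> 'a set \<Rightarrow> 'a \<Rightarrow> real \<Rightarrow> real \<Rightarrow> bool" where
  "prismatoid Q Qp Qm u a b \<longleftrightarrow>
     polytope Q \<and> Qp facet_of Q \<and> Qm facet_of Q \<and> Qp \<noteq> Qm \<and>
     {x. x extreme_point_of Q} \<subseteq> Qp \<union> Qm \<and>
     u \<noteq> 0 \<and> (\<forall>x\<in>Qp. u \<bullet> x = a) \<and> (\<forall>x\<in>Qm. u \<bullet> x = b)"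

definition facet_reach :: "'a::euclidean_space set \<Rightarrow> 'a set \<Rightarrow> 'a set \<Rightarrow> nat \<Rightarrow> bool" where
  "facet_reach Q F G n \<longleftrightarrow>
     (\<exists>k\<le>n. \<exists>Fs :: nat \<Rightarrow> 'a set. Fs 0 = F \<and> Fs k = G \<and>
        (\<forall>i\<le>k. Fs i facet_of Q) \<and>
        (\<forall>i<k. \<exists>R. ridge_of R Q \<and> R \<subseteq> Fs i \<and> R \<subseteq> Fs (Suc i)))"

text \<open>Normal cone (inside the linear subspace L, identified with the dual of the
  direction space of the hyperplane containing P) of the face F of P: the functionals
  whose maximum on P is attained at (every point of) F.\<close>
definition normal_cone :: "'a::euclidean_space set \<Rightarrow> 'a set \<Rightarrow> 'a set \<Rightarrow> 'a set" where
  "normal_cone L P F = {c \<in> L. \<forall>x\<in>F. \<forall>y\<in>P. c \<bullet> y \<le> c \<bullet> x}"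

definition unit_sphere_in :: "'a::euclidean_space set \<Rightarrow> 'a set" where
  "unit_sphere_in L = {c \<in> L. norm c = 1}"

definition geodesic_map :: "'a::euclidean_space set \<Rightarrow> 'a set \<Rightarrow> 'a set set" where
  "geodesic_map L P =
     {C. C \<noteq> {} \<and> (\<exists>F. F face_of P \<and> F \<noteq> {} \<and> C = normal_cone L P F \<inter> unit_sphere_in L)}"

definition common_refinement :: "'a set set \<Rightarrow> 'a set set \<Rightarrow> 'a set set" where
  "common_refinement M N = {C \<inter> D | C D. C \<in> M \<and> D \<in> N \<and> C \<inter> D \<noteq> {}}"

text \<open>Vertices (0-cells) and edges (1-cells) of a spherical cell decomposition.
  A spherical cell has dimension dim(span) - 1.\<close>
definition map_vertices :: "'a::euclidean_space set set \<Rightarrow> 'a set" where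
  "map_vertices M = {v. {v} \<in> M}"

definition map_edges :: "'a::euclidean_space set set \<Rightarrow> 'a set set" where
  "map_edges M = {E \<in> M. dim E = 2}"

definition map_adjacent :: "'a::euclidean_space set set \<Rightarrow> 'a \<Rightarrow> 'a \<Rightarrow> bool" where
  "map_adjacent M v w \<longleftrightarrow> v \<in> map_vertices M \<and> w \<in> map_vertices M \<and>
     (\<exists>E\<in>map_edges M. v \<in> E \<and> w \<in> E)"

definition map_reach :: "'a::euclidean_space set set \<Rightarrow> 'a set \<Rightarrow> 'a set \<Rightarrow> nat \<Rightarrow> bool" where
  "map_reach M A B n \<longleftrightarrow>
     (\<exists>k\<le>n. \<exists>p :: nat \<Rightarrow> 'a. p 0 \<in> A \<and> p k \<in> B \<and>
        (\<forall>i\<le>k. p i \<in> map_vertices M) \<and>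
        (\<forall>i<k. map_adjacent M (p i) (p (Suc i))))"

end

theory Submission
  imports Defs
begin

text \<open>Adding to a functional c orthogonal to u the right multiple of u yields a functional whose
  maximal face on Q is the convex hull of the maximal faces of c on the two bases. Every facet of Q
  other than Q^+ and Q^- arises in this way from a unique unit direction c, and these directions
  are exactly the vertices of the common refinement of G^+ and G^-. Two such facets share a ridge
  exactly when their directions span an edge of the refinement, and a facet shares a ridge with
  Q^+ (resp. Q^-) exactly when its direction is a vertex of G^+ (resp. G^-). So shortest facet
  walks Q^+ = F_0, ..., F_k = Q^- correspond to edge walks of length k - 2 in the refinement.\<close>

lemma dim_orthogonal_complement_add:
  fixes N :: "'a::euclidean_space set"
  shows "dim {z. \<forall>n\<in>N. n \<bullet> z = 0} + dim N = DIM('a)"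
proof -
  have "{z. \<forall>n\<in>N. n \<bullet> z = 0} = {y \<in> UNIV. \<forall>x \<in> span N. orthogonal x y}"
  proof (intro set_eqI iffI)
    fix z assume "z \<in> {z. \<forall>n\<in>N. n \<bullet> z = 0}"
    then have "\<forall>n\<in>N. orthogonal z n" by (simp add: orthogonal_def inner_commute)
    then have "\<forall>x\<in>span N. orthogonal z x" using orthogonal_to_span by blast
    then show "z \<in> {y \<in> UNIV. \<forall>x \<in> span N. orthogonal x y}"
      by (simp add: orthogonal_commute)
  qed (auto simp: orthogonal_def span_base)
  then show ?thesis
    using dim_subspace_orthogonal_to_vectors[of "span N" UNIV] by simp
qed

lemma aff_dim_common_level_set:
  fixes N :: "'a::euclidean_space set"
  shows "aff_dim {y. \<forall>n\<in>N. n \<bullet> y = n \<bullet> x0} = int DIM('a) - int (dim N)"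
proof -
  let ?Z = "{z. \<forall>n\<in>N. n \<bullet> z = 0}"
  have "subspace ?Z" unfolding subspace_def by (simp add: inner_add_right)
  have "{y. \<forall>n\<in>N. n \<bullet> y = n \<bullet> x0} = (+) x0 ` ?Z"
  proof (intro set_eqI iffI)
    fix y assume "y \<in> {y. \<forall>n\<in>N. n \<bullet> y = n \<bullet> x0}"
    then have "y - x0 \<in> ?Z" by (simp add: inner_diff_right)
    then show "y \<in> (+) x0 ` ?Z" by (rule rev_image_eqI) simp
  qed (auto simp: inner_add_right)
  moreover have "aff_dim ?Z = int (dim ?Z)"
    using aff_dim_subspace[OF \<open>subspace ?Z\<close>] .
  ultimately show ?thesis
    using dim_orthogonal_complement_add[of N] aff_dim_translation_eq[of x0 ?Z] by simp
qed

lemma dim_normals_eq: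
  fixes S :: "'a::euclidean_space set"
  assumes "x0 \<in> S"
  shows "int (dim {n. \<forall>x\<in>S. n \<bullet> x = n \<bullet> x0}) = int DIM('a) - aff_dim S"
proof -
  let ?D = "(\<lambda>x. x - x0) ` S"
  have "aff_dim S = int (dim ?D)"
    using aff_dim_eq_dim_subtract[of x0 S] assms by (simp add: hull_inc)
  moreover have "{n. \<forall>x\<in>S. n \<bullet> x = n \<bullet> x0} = {z. \<forall>n\<in>?D. n \<bullet> z = 0}"
    by (auto simp: inner_diff_right inner_commute)
  ultimately show ?thesis using dim_orthogonal_complement_add[of ?D] by simp
qed

lemma dim_pair_eq_2:
  fixes x y :: "'a::euclidean_space"
  assumes "x \<noteq> 0" "y \<notin> span {x}"
  shows "dim {x, y} = 2"
proof -
  have "independent {x, y}"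
    using assms by (simp add: independent_insert insert_commute[of x y])
  moreover have "x \<noteq> y" using assms(2) span_base[of x "{x}"] by auto
  ultimately show ?thesis by (simp add: dim_eq_card_independent)
qed

lemma unit_multiple_cases:
  fixes x y :: "'a::real_normed_vector"
  assumes "norm x = 1" "norm y = 1" "y \<in> span {x}"
  shows "y = x \<or> y = - x"
proof -
  obtain l where l: "y = l *\<^sub>R x" using assms(3) by (auto simp: span_singleton)
  then have "\<bar>l\<bar> = 1" using assms(1,2) by simp
  then show ?thesis using l by (cases "l \<ge> 0") auto
qed

lemma constant_functionals_collinear:
  fixes F B :: "'a::euclidean_space set"
  assumes "x0 \<in> F" "subspace B" "(\<lambda>z. z - x0) ` F \<subseteq> B" "aff_dim F + 1 = int (dim B)"
    and "x \<in> B" "y \<in> B" "x \<noteq> 0"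
    and "\<forall>z\<in>F. x \<bullet> z = x \<bullet> x0" "\<forall>z\<in>F. y \<bullet> z = y \<bullet> x0"
  shows "y \<in> span {x}"
proof (rule ccontr)
  assume y: "y \<notin> span {x}"
  let ?A = "span ((\<lambda>z. z - x0) ` F)"
  let ?O = "{w \<in> B. \<forall>a \<in> ?A. orthogonal a w}"
  have "?A \<subseteq> B" using assms(3,2) by (rule span_minimal)
  then have "dim ?O + dim ?A = dim B"
    by (intro dim_subspace_orthogonal_to_vectors) (auto simp: assms(2))
  moreover have "aff_dim F = int (dim ?A)"
    using aff_dim_eq_dim_subtract[of x0 F] assms(1) by (simp add: hull_inc)
  ultimately have "dim ?O = 1" using assms(4) by linarith
  have normal: "w \<in> ?O" if "w \<in> B" "\<forall>z\<in>F. w \<bullet> z = w \<bullet> x0" for w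
  proof -
    have "\<forall>a\<in>(\<lambda>z. z - x0) ` F. orthogonal w a"
      using that(2) by (auto simp: orthogonal_def inner_diff_right)
    then have "\<forall>a\<in>?A. orthogonal w a" using orthogonal_to_span by blast
    then show ?thesis using that(1) by (simp add: orthogonal_commute)
  qed
  have "{x, y} \<subseteq> ?O" using normal assms(5,6,8,9) by blast
  then have "dim {x, y} \<le> dim ?O" by (rule dim_subset)
  then show False using dim_pair_eq_2[OF assms(7) y] \<open>dim ?O = 1\<close> by simp
qed

lemma face_of_polyhedron_two_facets:
  fixes P F :: "'a::euclidean_space set"
  assumes "polyhedron P" "F face_of P" "F \<noteq> {}" "F \<noteq> P" "\<not> F facet_of P" "P \<noteq> UNIV"
  shows "\<exists>G1 G2. G1 facet_of P \<and> G2 facet_of P \<and> F \<subseteq> G1 \<and> F \<subseteq> G2 \<and> G1 \<noteq> G2"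
proof (rule ccontr)
  let ?FF = "{G. G facet_of P \<and> F \<subseteq> G}"
  assume "\<not> ?thesis"
  then consider "?FF = {}" | G where "?FF = {G}" by blast
  moreover have "F = \<Inter>?FF" using face_of_polyhedron[OF assms(1-4)] .
  ultimately show False
  proof cases
    case 1
    then have "F = UNIV" using \<open>F = \<Inter>?FF\<close> by (metis Inter_empty)
    then show False using assms(2,6) face_of_imp_subset by blast
  next
    case (2 G)
    then show False using \<open>F = \<Inter>?FF\<close> assms(5) by auto
  qed
qed

lemma facet_subset_proper_face_eq:
  fixes S :: "'a::euclidean_space set"
  assumes "convex S" "F facet_of S" "G face_of S" "G \<noteq> S" "F \<subseteq> G"
  shows "F = G"
proof (rule ccontr)
  assume "F \<noteq> G"
  moreover have "F face_of G"
    using face_of_subset[OF facet_of_imp_face_of[OF assms(2)] assms(5) face_of_imp_subset[OF assms(3)]] .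
  ultimately have "aff_dim F < aff_dim G"
    using face_of_aff_dim_lt[OF face_of_imp_convex[OF assms(3)]] by blast
  moreover have "aff_dim G < aff_dim S" using face_of_aff_dim_lt[OF assms(1,3,4)] .
  ultimately show False using assms(2) by (simp add: facet_of_def)
qed

lemma full_dim_polyhedron_facet_halfspaces:
  fixes Q :: "'a::euclidean_space set"
  assumes "polyhedron Q" "aff_dim Q = int DIM('a)"
  obtains H :: "'a set set" and n :: "'a set \<Rightarrow> 'a" and \<beta> :: "'a set \<Rightarrow> real"
  where "finite H" "Q = \<Inter>H" "\<And>h. h \<in> H \<Longrightarrow> h = {x. n h \<bullet> x \<le> \<beta> h}"
    "\<And>G. G facet_of Q \<longleftrightarrow> (\<exists>h. h \<in> H \<and> G = Q \<inter> {x. n h \<bullet> x = \<beta> h})"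
proof -
  obtain H where "finite H" and H_eq: "Q = affine hull Q \<inter> \<Inter>H"
    and "\<And>h. h \<in> H \<Longrightarrow> \<exists>a b. a \<noteq> 0 \<and> h = {x. a \<bullet> x \<le> b}"
    and H_minimal: "\<And>H'. H' \<subset> H \<Longrightarrow> Q \<subset> affine hull Q \<inter> \<Inter>H'"
    using assms(1) by (simp add: polyhedron_Int_affine_minimal) meson
  then obtain n \<beta> where hs: "\<And>h. h \<in> H \<Longrightarrow> n h \<noteq> 0 \<and> h = {x. n h \<bullet> x \<le> \<beta> h}"
    by metis
  show ?thesis
  proof (rule that[OF \<open>finite H\<close>])
    show "Q = \<Inter>H" using H_eq assms(2) aff_dim_eq_full by auto
    show "h = {x. n h \<bullet> x \<le> \<beta> h}" if "h \<in> H" for h using hs[OF that] by blast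
    show "G facet_of Q \<longleftrightarrow> (\<exists>h. h \<in> H \<and> G = Q \<inter> {x. n h \<bullet> x = \<beta> h})" for G
      by (rule facet_of_polyhedron_explicit[OF \<open>finite H\<close> H_eq hs H_minimal])
  qed
qed

lemma mem_face_if_on_facets_through:
  fixes Q R :: "'a::euclidean_space set"
  assumes "polyhedron Q" "R face_of Q" "R \<noteq> {}" "R \<noteq> Q" "x0 \<in> R"
    and "y \<in> Q" "\<And>G. G facet_of Q \<Longrightarrow> x0 \<in> G \<Longrightarrow> y \<in> G"
  shows "y \<in> R"
proof -
  have "y \<in> \<Inter>{G. G facet_of Q \<and> R \<subseteq> G}" using assms(5,7) by blast
  then show ?thesis using face_of_polyhedron[OF assms(1-4)] by simp
qed

lemma mem_face_if_tight_constraints_agree: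
  fixes Q R :: "'a::euclidean_space set"
  assumes "polyhedron Q" "R face_of Q" "R \<noteq> {}" "R \<noteq> Q" "x0 \<in> R"
    and "Q = \<Inter>H" and hs: "\<And>h. h \<in> H \<Longrightarrow> h = {x. n h \<bullet> x \<le> \<beta> h}"
    and facet_iff: "\<And>G. G facet_of Q \<longleftrightarrow> (\<exists>h. h \<in> H \<and> G = Q \<inter> {x. n h \<bullet> x = \<beta> h})"
    and y: "\<And>h. h \<in> H \<Longrightarrow> n h \<bullet> x0 = \<beta> h \<Longrightarrow> n h \<bullet> y = \<beta> h"
      "\<And>h. h \<in> H \<Longrightarrow> n h \<bullet> x0 \<noteq> \<beta> h \<Longrightarrow> n h \<bullet> y < \<beta> h"
  shows "y \<in> R"
proof (rule mem_face_if_on_facets_through[OF assms(1-5)])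
  have "y \<in> h" if h: "h \<in> H" for h
  proof -
    have "n h \<bullet> y \<le> \<beta> h" using y h by (cases "n h \<bullet> x0 = \<beta> h") force+
    then show ?thesis by (subst hs[OF h]) simp
  qed
  then show "y \<in> Q" using assms(6) by blast
  show "y \<in> G" if "G facet_of Q" "x0 \<in> G" for G
  proof -
    obtain h where "h \<in> H" "G = Q \<inter> {x. n h \<bullet> x = \<beta> h}" using facet_iff \<open>G facet_of Q\<close> by blast
    then show ?thesis using y(1) \<open>x0 \<in> G\<close> \<open>y \<in> Q\<close> by simp
  qed
qed

text \<open>Near a relative interior point x0 of R only the facet inequalities tight at x0 matter,
  so the points of their common level set close to x0 stay in R.\<close>
lemma face_aff_dim_ge_facet_normals:
  fixes Q R :: "'a::euclidean_space set"
  assumes Q: "polyhedron Q" "aff_dim Q = int DIM('a)" and R: "R face_of Q" "R \<noteq> {}" "R \<noteq> Q"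
  obtains X where
    "\<And>n. n \<in> X \<Longrightarrow> \<exists>\<beta>. Q \<subseteq> {x. n \<bullet> x \<le> \<beta>} \<and>
        Q \<inter> {x. n \<bullet> x = \<beta>} facet_of Q \<and> R \<subseteq> Q \<inter> {x. n \<bullet> x = \<beta>}"
    "int DIM('a) - int (dim X) \<le> aff_dim R"
proof -
  obtain H nv bv where "finite H" and Q_eq: "Q = \<Inter>H"
    and hs: "\<And>h. h \<in> H \<Longrightarrow> h = {x. nv h \<bullet> x \<le> bv h}"
    and facet_iff: "\<And>G. G facet_of Q \<longleftrightarrow> (\<exists>h. h \<in> H \<and> G = Q \<inter> {x. nv h \<bullet> x = bv h})"
    using full_dim_polyhedron_facet_halfspaces[OF Q] by metis
  have Q_le: "Q \<subseteq> {x. nv h \<bullet> x \<le> bv h}" if "h \<in> H" for h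
  proof -
    have "Q \<subseteq> h" using Q_eq that by blast
    then show ?thesis by (subst (asm) hs[OF that])
  qed
  obtain x0 where x0: "x0 \<in> rel_interior R"
    using R(2) rel_interior_eq_empty face_of_imp_convex[OF R(1)] by blast
  have x0R: "x0 \<in> R" and RQ: "R \<subseteq> Q" using x0 rel_interior_subset R(1) face_of_imp_subset by blast+
  define T where "T = {h\<in>H. nv h \<bullet> x0 = bv h}"
  have T_facet: "Q \<inter> {x. nv h \<bullet> x = bv h} facet_of Q" if "h \<in> T" for h
    using facet_iff that by (auto simp: T_def)
  have T_contains: "R \<subseteq> Q \<inter> {x. nv h \<bullet> x = bv h}" if "h \<in> T" for h
    using subset_of_face_of[OF facet_of_imp_face_of[OF T_facet[OF that]] RQ] x0 x0R RQ that
    by (auto simp: T_def)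
  define A where "A = {y. \<forall>n\<in>nv ` T. n \<bullet> y = n \<bullet> x0}"
  define U where "U = (\<Inter>h\<in>H - T. {x. nv h \<bullet> x < bv h})"
  have "open U" unfolding U_def using \<open>finite H\<close> by (intro open_INT) (auto intro: open_halfspace_lt)
  have "x0 \<in> U" using Q_le x0R RQ by (force simp: U_def T_def)
  have "A \<inter> U \<subseteq> R"
  proof
    fix y assume "y \<in> A \<inter> U"
    then show "y \<in> R"
      using mem_face_if_tight_constraints_agree[OF Q(1) R x0R Q_eq hs facet_iff]
      by (auto simp: A_def U_def T_def)
  qed
  have "A = (\<Inter>n\<in>nv ` T. {y. n \<bullet> y = n \<bullet> x0})" by (auto simp: A_def)
  then have "convex A" by (simp add: convex_INT convex_hyperplane)
  then have "aff_dim A = aff_dim (A \<inter> U)"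
    using aff_dim_convex_Int_open[OF _ \<open>open U\<close>] \<open>x0 \<in> U\<close> by (force simp: A_def)
  also have "\<dots> \<le> aff_dim R" using \<open>A \<inter> U \<subseteq> R\<close> by (rule aff_dim_subset)
  finally have "aff_dim A \<le> aff_dim R" .
  moreover have "aff_dim A = int DIM('a) - int (dim (nv ` T))"
    unfolding A_def by (rule aff_dim_common_level_set)
  ultimately have "int DIM('a) - int (dim (nv ` T)) \<le> aff_dim R" by simp
  moreover have "\<exists>\<beta>. Q \<subseteq> {x. n \<bullet> x \<le> \<beta>} \<and>
      Q \<inter> {x. n \<bullet> x = \<beta>} facet_of Q \<and> R \<subseteq> Q \<inter> {x. n \<bullet> x = \<beta>}" if n: "n \<in> nv ` T" for n
  proof -
    obtain h where "h \<in> T" "n = nv h" using n by blast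
    then show ?thesis using Q_le T_facet T_contains by (intro exI[of _ "bv h"]) (auto simp: T_def)
  qed
  ultimately show ?thesis using that by blast
qed

lemma facet_of_facet_iff_ridge:
  fixes Q :: "'a::euclidean_space set"
  assumes "B facet_of Q" "F face_of B" "F \<noteq> {}"
  shows "F facet_of B \<longleftrightarrow> ridge_of F Q"
  using assms face_of_trans[OF assms(2) facet_of_imp_face_of[OF assms(1)]]
  by (auto simp: facet_of_def ridge_of_def)

lemma ridge_subset_face_of_facet:
  fixes Q :: "'a::euclidean_space set"
  assumes "B facet_of Q" "F face_of B" "F \<noteq> B" "ridge_of R Q" "R \<subseteq> F"
  shows "F facet_of B"
proof -
  have "aff_dim R \<le> aff_dim F" using assms(5) by (rule aff_dim_subset)
  moreover have "aff_dim F < aff_dim B"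
    using face_of_aff_dim_lt[OF face_of_imp_convex[OF facet_of_imp_face_of[OF assms(1)]] assms(2,3)] .
  ultimately show ?thesis using assms(1,2,4,5) by (auto simp: facet_of_def ridge_of_def)
qed

definition maximizers :: "'a::real_inner set \<Rightarrow> 'a \<Rightarrow> 'a set" where
  "maximizers P c = {x\<in>P. \<forall>y\<in>P. c \<bullet> y \<le> c \<bullet> x}"

definition max_value :: "'a::real_inner set \<Rightarrow> 'a \<Rightarrow> real" where
  "max_value P c = c \<bullet> (SOME x. x \<in> maximizers P c)"

lemma maximizers_subset: "maximizers P c \<subseteq> P"
  by (auto simp: maximizers_def)

lemma maximizers_nonempty:
  fixes P :: "'a::real_inner set"
  assumes "compact P" "P \<noteq> {}"
  shows "maximizers P c \<noteq> {}"
proof -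
  have "continuous_on P (\<lambda>x. c \<bullet> x)" by (intro continuous_intros)
  then show ?thesis
    using continuous_attains_sup[OF assms] by (auto simp: maximizers_def)
qed

lemma maximizers_face_of:
  assumes "convex P"
  shows "maximizers P c face_of P"
proof (cases "maximizers P c = {}")
  case False
  then obtain x0 where x0: "x0 \<in> maximizers P c" by blast
  then have "maximizers P c = P \<inter> {x. c \<bullet> x = c \<bullet> x0}"
    by (auto simp: maximizers_def intro: order.antisym)
  then show ?thesis
    using x0 by (auto simp: maximizers_def intro: face_of_Int_supporting_hyperplane_le assms)
qed simp

lemma maximizers_scaleR: "l > 0 \<Longrightarrow> maximizers P (l *\<^sub>R c) = maximizers P c"
  by (auto simp: maximizers_def)

lemma maximizers_sgn: "maximizers P (sgn c) = maximizers P c"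
  by (cases "c = 0") (simp_all add: sgn_div_norm maximizers_scaleR)

lemma maximizers_same_value: "x \<in> maximizers P c \<Longrightarrow> y \<in> maximizers P c \<Longrightarrow> c \<bullet> x = c \<bullet> y"
  by (auto simp: maximizers_def intro: order.antisym)

lemma maximizers_antipodal_constant:
  assumes "x0 \<in> maximizers P c" "x0 \<in> maximizers P (- c)" "x \<in> P"
  shows "c \<bullet> x = c \<bullet> x0"
  using assms by (force simp: maximizers_def)

lemma
  fixes P :: "'a::real_inner set"
  assumes "compact P" "P \<noteq> {}"
  shows maximizers_iff_max_value: "x \<in> maximizers P c \<longleftrightarrow> x \<in> P \<and> c \<bullet> x = max_value P c"
    and max_value_ge: "y \<in> P \<Longrightarrow> c \<bullet> y \<le> max_value P c"
proof -
  have some: "(SOME x. x \<in> maximizers P c) \<in> maximizers P c"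
    using maximizers_nonempty[OF assms] some_in_eq by blast
  then show ge: "y \<in> P \<Longrightarrow> c \<bullet> y \<le> max_value P c" for y
    by (auto simp: max_value_def maximizers_def)
  show "x \<in> maximizers P c \<longleftrightarrow> x \<in> P \<and> c \<bullet> x = max_value P c"
  proof
    assume "x \<in> maximizers P c"
    then show "x \<in> P \<and> c \<bullet> x = max_value P c"
      using maximizers_same_value[OF _ some] maximizers_subset unfolding max_value_def by blast
  next
    assume "x \<in> P \<and> c \<bullet> x = max_value P c"
    then show "x \<in> maximizers P c" using ge by (simp add: maximizers_def)
  qed
qed

lemma normal_cone_eq_maximizers:
  "F \<subseteq> P \<Longrightarrow> normal_cone L P F = {c\<in>L. F \<subseteq> maximizers P c}"
  by (auto simp: normal_cone_def maximizers_def)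

definition perp_proj :: "'a::real_inner \<Rightarrow> 'a \<Rightarrow> 'a" where
  "perp_proj u x = x - (x \<bullet> u / (u \<bullet> u)) *\<^sub>R u"

lemma linear_perp_proj: "linear (perp_proj u)"
  by (rule linearI) (simp_all add: perp_proj_def inner_add_left add_divide_distrib algebra_simps)

lemma perp_proj_orthogonal: "u \<noteq> 0 \<Longrightarrow> perp_proj u x \<bullet> u = 0"
  by (simp add: perp_proj_def inner_diff_left)

lemma perp_proj_add_multiple: "c \<bullet> u = 0 \<Longrightarrow> u \<noteq> 0 \<Longrightarrow> perp_proj u (c + t *\<^sub>R u) = c"
  by (simp add: perp_proj_def inner_add_left)

lemma inj_on_perp_proj:
  assumes "u \<bullet> \<delta> \<noteq> 0"
  shows "inj_on (perp_proj u) {y. y \<bullet> \<delta> = 0}"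
proof (rule inj_onI)
  fix y1 y2 assume y: "y1 \<in> {y. y \<bullet> \<delta> = 0}" "y2 \<in> {y. y \<bullet> \<delta> = 0}" "perp_proj u y1 = perp_proj u y2"
  define t where "t = (y1 - y2) \<bullet> u / (u \<bullet> u)"
  have "y1 - y2 = t *\<^sub>R u"
    using y(3) by (simp add: perp_proj_def t_def inner_diff_left algebra_simps diff_divide_distrib)
  moreover have "(y1 - y2) \<bullet> \<delta> = 0" using y(1,2) by (simp add: inner_diff_left)
  ultimately have "t = 0" using assms by simp
  then show "y1 = y2" using \<open>y1 - y2 = t *\<^sub>R u\<close> by simp
qed

lemma dim_perp_proj_image:
  fixes u \<delta> :: "'a::euclidean_space"
  assumes "u \<bullet> \<delta> \<noteq> 0" "\<forall>n\<in>X. n \<bullet> \<delta> = 0"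
  shows "dim (perp_proj u ` X) = dim X"
proof -
  have "subspace {y. y \<bullet> \<delta> = 0}" by (simp add: subspace_def inner_add_left)
  then have "span X \<subseteq> {y. y \<bullet> \<delta> = 0}" using assms(2) by (intro span_minimal) auto
  then have "inj_on (perp_proj u) (span X)" using inj_on_perp_proj[OF assms(1)] inj_on_subset by blast
  then show ?thesis using dim_image_eq[OF linear_perp_proj] by blast
qed

text \<open>On S the functionals a and perp_proj u a differ by a constant.\<close>
lemma maximizers_perp_proj:
  assumes "S \<subseteq> {x. u \<bullet> x = \<alpha>}" "S \<subseteq> {x. a \<bullet> x \<le> \<beta>}" "x1 \<in> S" "a \<bullet> x1 = \<beta>"
  shows "maximizers S (perp_proj u a) = S \<inter> {x. a \<bullet> x = \<beta>}"
proof -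
  have shift: "perp_proj u a \<bullet> x = a \<bullet> x - (a \<bullet> u / (u \<bullet> u)) * \<alpha>" if "x \<in> S" for x
  proof -
    have "u \<bullet> x = \<alpha>" using assms(1) that by blast
    then show ?thesis by (simp add: perp_proj_def inner_diff_left)
  qed
  have "x \<in> maximizers S (perp_proj u a) \<longleftrightarrow> x \<in> S \<and> (\<forall>y\<in>S. a \<bullet> y \<le> a \<bullet> x)" for x
    by (auto simp: maximizers_def shift)
  moreover have "(\<forall>y\<in>S. a \<bullet> y \<le> a \<bullet> x) \<longleftrightarrow> a \<bullet> x = \<beta>" if "x \<in> S" for x
    using assms(2-4) that by (metis mem_Collect_eq order.antisym subsetD)
  ultimately show ?thesis by blast
qed

definition perp_sphere :: "'a::euclidean_space \<Rightarrow> 'a set" where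
  "perp_sphere u = unit_sphere_in {c. c \<bullet> u = 0}"

lemma mem_perp_sphere: "c \<in> perp_sphere u \<longleftrightarrow> c \<bullet> u = 0 \<and> norm c = 1"
  by (simp add: perp_sphere_def unit_sphere_in_def)

lemma sgn_mem_perp_sphere: "c \<bullet> u = 0 \<Longrightarrow> c \<noteq> 0 \<Longrightarrow> sgn c \<in> perp_sphere u"
  by (simp add: mem_perp_sphere sgn_div_norm norm_sgn)

lemma geodesic_map_iff:
  "C \<in> geodesic_map {c. c \<bullet> u = 0} P \<longleftrightarrow>
     C \<noteq> {} \<and> (\<exists>F. F face_of P \<and> F \<noteq> {} \<and> C = {c\<in>perp_sphere u. F \<subseteq> maximizers P c})"
proof -
  have "normal_cone {c. c \<bullet> u = 0} P F \<inter> unit_sphere_in {c. c \<bullet> u = 0} =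
        {c\<in>perp_sphere u. F \<subseteq> maximizers P c}" if "F face_of P" for F
    using normal_cone_eq_maximizers[OF face_of_imp_subset[OF that]]
    by (auto simp: perp_sphere_def unit_sphere_in_def)
  then show ?thesis unfolding geodesic_map_def by blast
qed

definition walk :: "'b set \<Rightarrow> 'b set \<Rightarrow> 'b set \<Rightarrow> ('b \<Rightarrow> 'b \<Rightarrow> bool) \<Rightarrow> nat \<Rightarrow> (nat \<Rightarrow> 'b) \<Rightarrow> bool"
  where "walk A B V S k p \<longleftrightarrow>
    p 0 \<in> A \<and> p k \<in> B \<and> (\<forall>i\<le>k. p i \<in> V) \<and> (\<forall>i<k. S (p i) (p (Suc i)))"

definition shortest_walk ::
  "'b set \<Rightarrow> 'b set \<Rightarrow> 'b set \<Rightarrow> ('b \<Rightarrow> 'b \<Rightarrow> bool) \<Rightarrow> nat \<Rightarrow> (nat \<Rightarrow> 'b) \<Rightarrow> bool"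
  where "shortest_walk A B V S k p \<longleftrightarrow> walk A B V S k p \<and> (\<forall>k' p'. walk A B V S k' p' \<longrightarrow> k \<le> k')"

lemma shortest_walk_exists:
  assumes "walk A B V S k p"
  obtains k' p' where "k' \<le> k" "shortest_walk A B V S k' p'"
proof -
  let ?k = "LEAST k. \<exists>p. walk A B V S k p"
  have ex: "\<exists>p. walk A B V S k p" using assms by blast
  then obtain p' where "walk A B V S ?k p'" by (rule exE[OF LeastI[of "\<lambda>k. \<exists>p. walk A B V S k p"]])
  moreover have "?k \<le> k'" if "walk A B V S k' p'" for k' p'
    using that by (intro Least_le) blast
  ultimately have "shortest_walk A B V S ?k p'" by (simp add: shortest_walk_def)
  moreover have "?k \<le> k" using ex by (rule Least_le)
  ultimately show ?thesis using that by blast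
qed

context
  fixes A B V S k p
  assumes shortest: "shortest_walk A B V S k p"
begin

lemma shortest_walk_avoids_target: "i < k \<Longrightarrow> p i \<notin> B"
  using shortest by (fastforce simp: shortest_walk_def walk_def)

lemma shortest_walk_avoids_source:
  assumes "0 < i" "i \<le> k"
  shows "p i \<notin> A"
proof
  assume "p i \<in> A"
  then have "walk A B V S (k - i) (\<lambda>j. p (j + i))"
    using shortest assms by (auto simp: shortest_walk_def walk_def)
  then show False using shortest assms by (fastforce simp: shortest_walk_def)
qed

text \<open>Otherwise deleting the repeated point gives a shorter walk.\<close>
lemma shortest_walk_steps_distinct:
  assumes "i < k"
  shows "p i \<noteq> p (Suc i)"
proof
  assume eq: "p i = p (Suc i)"
  define p' where "p' j = (if j \<le> i then p j else p (Suc j))" for j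
  have w: "walk A B V S k p" using shortest by (simp add: shortest_walk_def)
  have "S (p' j) (p' (Suc j))" if "j < k - 1" for j
  proof (cases "j < i")
    case False
    then have "S (p (Suc j)) (p (Suc (Suc j)))" using w that by (simp add: walk_def)
    then show ?thesis using False eq by (auto simp: p'_def le_Suc_eq)
  qed (use w that in \<open>simp add: p'_def walk_def\<close>)
  moreover have "p' (k - 1) = p k"
  proof (cases "k - 1 \<le> i")
    case True
    then have "i = k - 1" "Suc i = k" using assms by linarith+
    then show ?thesis using eq by (simp add: p'_def)
  next
    case False
    then have "Suc (k - 1) = k" by linarith
    then show ?thesis using False by (simp add: p'_def)
  qed
  ultimately have "walk A B V S (k - 1) p'"
    using w assms by (auto simp: walk_def p'_def)
  then show False using shortest assms by (fastforce simp: shortest_walk_def)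
qed

end

definition shares_ridge :: "'a::euclidean_space set \<Rightarrow> 'a set \<Rightarrow> 'a set \<Rightarrow> bool" where
  "shares_ridge Q F G \<longleftrightarrow> (\<exists>R. ridge_of R Q \<and> R \<subseteq> F \<and> R \<subseteq> G)"

lemma facet_reach_iff_walk:
  "facet_reach Q F G n \<longleftrightarrow> (\<exists>k\<le>n. \<exists>Fs. walk {F} {G} {F. F facet_of Q} (shares_ridge Q) k Fs)"
  by (simp add: facet_reach_def walk_def shares_ridge_def)

lemma map_reach_iff_walk:
  "map_reach M A B n \<longleftrightarrow> (\<exists>k\<le>n. \<exists>p. walk A B (map_vertices M) (map_adjacent M) k p)"
  by (simp add: map_reach_def walk_def)

locale hyperplane_polytope =
  fixes P :: "'a::euclidean_space set" and u :: 'a and \<alpha> :: real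
  assumes polytope: "polytope P" and normal_nonzero: "u \<noteq> 0"
    and in_hyperplane: "\<And>x. x \<in> P \<Longrightarrow> u \<bullet> x = \<alpha>"
    and aff_dim_eq: "aff_dim P = int DIM('a) - 1"
begin

lemma nonempty: "P \<noteq> {}"
  using aff_dim_eq DIM_positive[where 'a='a] by (auto simp del: DIM_positive)

lemma convex: "convex P" and compact: "compact P" and polyhedron: "polyhedron P"
  using polytope polytope_imp_convex polytope_imp_compact polytope_imp_polyhedron by auto

lemma perp_constant_eq_0:
  assumes "c \<bullet> u = 0" and const: "\<And>x y. x \<in> P \<Longrightarrow> y \<in> P \<Longrightarrow> c \<bullet> x = c \<bullet> y"
  shows "c = 0"
proof (rule ccontr)
  assume "c \<noteq> 0"
  obtain x0 where x0: "x0 \<in> P" using nonempty by blast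
  have "c \<notin> span {u}"
  proof
    assume "c \<in> span {u}"
    then obtain k where k: "c = k *\<^sub>R u" by (auto simp: span_singleton)
    then have "k * (u \<bullet> u) = 0" using assms(1) by simp
    then show False using \<open>c \<noteq> 0\<close> k normal_nonzero by simp
  qed
  then have "dim {u, c} = 2" using dim_pair_eq_2 normal_nonzero by blast
  let ?S = "{y. \<forall>n\<in>{u, c}. n \<bullet> y = n \<bullet> x0}"
  have "aff_dim ?S = int DIM('a) - 2"
    using aff_dim_common_level_set[of "{u, c}" x0] \<open>dim {u, c} = 2\<close> by simp
  moreover have "P \<subseteq> ?S"
  proof
    fix y assume "y \<in> P"
    then show "y \<in> ?S"
      using in_hyperplane[OF \<open>y \<in> P\<close>] in_hyperplane[OF x0] const[OF \<open>y \<in> P\<close> x0] by simp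
  qed
  then have "aff_dim P \<le> aff_dim ?S" by (rule aff_dim_subset)
  ultimately show False using aff_dim_eq by linarith
qed

lemma antipodal_maximizer_eq_0:
  assumes "x0 \<in> maximizers P c" "x0 \<in> maximizers P (- c)" "c \<bullet> u = 0"
  shows "c = 0"
  using perp_constant_eq_0[OF assms(3)] maximizers_antipodal_constant[OF assms(1,2)] by metis

lemma maximizers_neq:
  assumes "c \<in> perp_sphere u"
  shows "maximizers P c \<noteq> P"
proof
  assume "maximizers P c = P"
  then have "c = 0"
    using assms perp_constant_eq_0 maximizers_same_value by (metis mem_perp_sphere)
  then show False using assms by (simp add: mem_perp_sphere)
qed

lemma facet_normal_unique:
  assumes F: "F facet_of P" and c: "c \<in> perp_sphere u" and c': "c' \<in> perp_sphere u"
    and "F \<subseteq> maximizers P c" "F \<subseteq> maximizers P c'"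
  shows "c' = c"
proof -
  obtain x0 where x0: "x0 \<in> F" using F by (auto simp: facet_of_def)
  have "aff_dim F = int DIM('a) - 2" using F aff_dim_eq by (simp add: facet_of_def)
  moreover have "aff_dim F \<ge> 0" using x0 by (metis aff_dim_negative_iff empty_iff not_less)
  ultimately have dims: "aff_dim F + 1 = int (dim {c. c \<bullet> u = 0})"
    using dim_hyperplane[OF normal_nonzero] by (simp add: inner_commute)
  have "(\<lambda>z. z - x0) ` F \<subseteq> {c. c \<bullet> u = 0}"
  proof (rule image_subsetI)
    fix z assume "z \<in> F"
    then have "u \<bullet> z = \<alpha>" "u \<bullet> x0 = \<alpha>"
      using x0 F in_hyperplane facet_of_imp_subset by blast+
    then show "z - x0 \<in> {c. c \<bullet> u = 0}" by (simp add: inner_diff_left inner_diff_right inner_commute)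
  qed
  moreover have "subspace {c. c \<bullet> u = 0}" by (simp add: subspace_def inner_add_left)
  moreover have "\<forall>z\<in>F. d \<bullet> z = d \<bullet> x0" if "F \<subseteq> maximizers P d" for d
    using that x0 maximizers_same_value by blast
  moreover have "c \<noteq> 0" using c by (auto simp: mem_perp_sphere)
  ultimately have "c' \<in> span {c}"
    using constant_functionals_collinear[OF x0 _ _ dims, of c c'] assms by (auto simp: mem_perp_sphere)
  then consider "c' = c" | "c' = - c" using unit_multiple_cases c c' by (auto simp: mem_perp_sphere)
  then show ?thesis
  proof cases
    case 2
    then have "c = 0" using antipodal_maximizer_eq_0 x0 assms(4,5) c by (auto simp: mem_perp_sphere)
    then show ?thesis using c by (simp add: mem_perp_sphere)
  qed
qed

lemma facet_eq_maximizers: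
  assumes G: "G facet_of P"
  shows "\<exists>c\<in>perp_sphere u. G = maximizers P c"
proof -
  obtain a \<beta> where "P \<subseteq> {x. a \<bullet> x \<le> \<beta>}" and G_eq: "G = P \<inter> {x. a \<bullet> x = \<beta>}"
    using facet_of_polyhedron[OF polyhedron G] by blast
  moreover obtain x1 where "x1 \<in> G" using G by (auto simp: facet_of_def)
  ultimately have max: "maximizers P (perp_proj u a) = G"
    using maximizers_perp_proj[of P u \<alpha>] in_hyperplane by blast
  moreover have "G \<noteq> P" using G by (auto simp: facet_of_def)
  ultimately have "perp_proj u a \<noteq> 0" by (auto simp: maximizers_def)
  then have "sgn (perp_proj u a) \<in> perp_sphere u"
    using perp_proj_orthogonal normal_nonzero sgn_mem_perp_sphere by blast
  then show ?thesis using max maximizers_sgn by metis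
qed

lemma maximizers_facet_iff:
  assumes c: "c \<in> perp_sphere u"
  shows "maximizers P c facet_of P \<longleftrightarrow>
         {c'\<in>perp_sphere u. maximizers P c \<subseteq> maximizers P c'} = {c}"
proof
  assume "maximizers P c facet_of P"
  then show "{c'\<in>perp_sphere u. maximizers P c \<subseteq> maximizers P c'} = {c}"
    using facet_normal_unique c by blast
next
  assume unique: "{c'\<in>perp_sphere u. maximizers P c \<subseteq> maximizers P c'} = {c}"
  show "maximizers P c facet_of P"
  proof (rule ccontr)
    assume "\<not> maximizers P c facet_of P"
    moreover have "P \<noteq> UNIV" using compact compact_imp_bounded not_bounded_UNIV by blast
    ultimately obtain G1 G2 where "G1 facet_of P" "G2 facet_of P" "G1 \<noteq> G2"
      "maximizers P c \<subseteq> G1" "maximizers P c \<subseteq> G2"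
      using face_of_polyhedron_two_facets[OF polyhedron maximizers_face_of[OF convex]
          maximizers_nonempty[OF compact nonempty] maximizers_neq[OF c]] by blast
    then show False using unique facet_eq_maximizers by (metis (mono_tags, lifting) mem_Collect_eq singletonD)
  qed
qed

lemma geodesic_map_vertex_iff:
  "c \<in> map_vertices (geodesic_map {c. c \<bullet> u = 0} P) \<longleftrightarrow>
   c \<in> perp_sphere u \<and> maximizers P c facet_of P"
proof
  assume "c \<in> map_vertices (geodesic_map {c. c \<bullet> u = 0} P)"
  then obtain F where "F face_of P" "F \<noteq> {}" and cell: "{c} = {c'\<in>perp_sphere u. F \<subseteq> maximizers P c'}"
    by (auto simp: map_vertices_def geodesic_map_iff)
  then have "c \<in> perp_sphere u" "F \<subseteq> maximizers P c" by auto
  moreover have "{c'\<in>perp_sphere u. maximizers P c \<subseteq> maximizers P c'} = {c}"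
    using cell calculation by blast
  ultimately show "c \<in> perp_sphere u \<and> maximizers P c facet_of P"
    using maximizers_facet_iff by blast
next
  assume "c \<in> perp_sphere u \<and> maximizers P c facet_of P"
  then have "{c} = {c'\<in>perp_sphere u. maximizers P c \<subseteq> maximizers P c'}"
    using maximizers_facet_iff by blast
  then show "c \<in> map_vertices (geodesic_map {c. c \<bullet> u = 0} P)"
    unfolding map_vertices_def geodesic_map_iff
    using maximizers_face_of[OF convex] maximizers_nonempty[OF compact nonempty] by blast
qed

lemma dim_pair_common_maximizer:
  assumes "v \<in> perp_sphere u" "w \<in> perp_sphere u" "v \<noteq> w"
    and "x \<in> maximizers P v" "x \<in> maximizers P w"
  shows "dim {v, w} = 2"
proof (rule dim_pair_eq_2)
  show "v \<noteq> 0" using assms(1) by (auto simp: mem_perp_sphere)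
  show "w \<notin> span {v}"
  proof
    assume "w \<in> span {v}"
    then have "w = - v"
      using unit_multiple_cases assms(1-3) by (auto simp: mem_perp_sphere)
    then have "v = 0"
      using antipodal_maximizer_eq_0 assms(1,4,5) by (auto simp: mem_perp_sphere)
    then show False using \<open>v \<noteq> 0\<close> by simp
  qed
qed

end

locale full_prismatoid =
  fixes Q Qp Qm :: "'a::euclidean_space set" and u :: 'a and a b :: real
  assumes full_dim: "aff_dim Q = int DIM('a)"
    and prismatoid: "prismatoid Q Qp Qm u a b"
begin

lemma polytope_Q: "polytope Q" and Qp_facet: "Qp facet_of Q" and Qm_facet: "Qm facet_of Q"
  and bases_distinct: "Qp \<noteq> Qm"
  and extreme_points_in_bases: "\<And>x. x extreme_point_of Q \<Longrightarrow> x \<in> Qp \<union> Qm"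
  and u_nonzero: "u \<noteq> 0"
  and Qp_level: "\<And>x. x \<in> Qp \<Longrightarrow> u \<bullet> x = a" and Qm_level: "\<And>x. x \<in> Qm \<Longrightarrow> u \<bullet> x = b"
  using prismatoid by (auto simp: prismatoid_def)

lemma convex_Q: "convex Q" and compact_Q: "compact Q" and polyhedron_Q: "polyhedron Q"
  using polytope_Q polytope_imp_convex polytope_imp_compact polytope_imp_polyhedron by auto

lemma Qp_subset: "Qp \<subseteq> Q" and Qm_subset: "Qm \<subseteq> Q"
  using Qp_facet Qm_facet facet_of_imp_subset by auto

lemma Qp_neq_Q: "Qp \<noteq> Q" and Qm_neq_Q: "Qm \<noteq> Q"
  using Qp_facet Qm_facet facet_of_irrefl by metis+

lemma convex_Qp: "convex Qp" and convex_Qm: "convex Qm"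
  using Qp_facet Qm_facet facet_of_imp_face_of face_of_imp_convex by blast+

lemma hyperplane_polytope_Qp: "hyperplane_polytope Qp u a"
  using face_of_polytope_polytope[OF polytope_Q] Qp_facet full_dim
  by unfold_locales (auto simp: Qp_level u_nonzero facet_of_def)

lemma hyperplane_polytope_Qm: "hyperplane_polytope Qm u b"
  using face_of_polytope_polytope[OF polytope_Q] Qm_facet full_dim
  by unfold_locales (auto simp: Qm_level u_nonzero facet_of_def)

end

sublocale full_prismatoid \<subseteq> upper: hyperplane_polytope Qp u a
  by (rule hyperplane_polytope_Qp)

sublocale full_prismatoid \<subseteq> lower: hyperplane_polytope Qm u b
  by (rule hyperplane_polytope_Qm)

context full_prismatoid
begin

lemma Q_eq_hull_bases: "Q = convex hull (Qp \<union> Qm)"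
proof
  have "Q = convex hull {x. x extreme_point_of Q}"
    by (rule Krein_Milman_Minkowski[OF compact_Q convex_Q])
  also have "\<dots> \<subseteq> convex hull (Qp \<union> Qm)"
    using extreme_points_in_bases by (intro hull_mono) auto
  finally show "Q \<subseteq> convex hull (Qp \<union> Qm)" .
qed (use Qp_subset Qm_subset convex_Q in \<open>intro hull_minimal; auto\<close>)

lemma levels_distinct: "a \<noteq> b"
proof
  assume "a = b"
  then have "Q \<subseteq> {x. u \<bullet> x = a}" unfolding Q_eq_hull_bases
    using Qp_level Qm_level by (intro hull_minimal) (auto simp: convex_hyperplane)
  then have "aff_dim Q \<le> aff_dim {x. u \<bullet> x = a}" by (rule aff_dim_subset)
  then show False using full_dim u_nonzero by simp
qed

lemma bases_disjoint: "Qp \<inter> Qm = {}"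
  using Qp_level Qm_level levels_distinct by fastforce

lemma face_eq_hull_base_parts:
  assumes F: "F face_of Q"
  shows "F = convex hull ((F \<inter> Qp) \<union> (F \<inter> Qm))"
proof
  have "F = convex hull {x. x extreme_point_of F}"
    using Krein_Milman_Minkowski face_of_imp_compact[OF convex_Q compact_Q F] face_of_imp_convex[OF F]
    by blast
  also have "\<dots> \<subseteq> convex hull ((F \<inter> Qp) \<union> (F \<inter> Qm))"
    using extreme_point_of_face[OF F] extreme_points_in_bases by (intro hull_mono) auto
  finally show "F \<subseteq> convex hull ((F \<inter> Qp) \<union> (F \<inter> Qm))" .
qed (use face_of_imp_convex[OF F] in \<open>intro hull_minimal; auto\<close>)

lemma face_subset_Qp:
  assumes "F face_of Q" "F \<inter> Qm = {}"
  shows "F \<subseteq> Qp"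
proof -
  have "F = convex hull (F \<inter> Qp)" using face_eq_hull_base_parts[OF assms(1)] assms(2) by simp
  also have "\<dots> \<subseteq> Qp" using convex_Qp by (intro hull_minimal) auto
  finally show ?thesis .
qed

lemma face_subset_Qm:
  assumes "F face_of Q" "F \<inter> Qp = {}"
  shows "F \<subseteq> Qm"
proof -
  have "F = convex hull (F \<inter> Qm)" using face_eq_hull_base_parts[OF assms(1)] assms(2) by simp
  also have "\<dots> \<subseteq> Qm" using convex_Qm by (intro hull_minimal) auto
  finally show ?thesis .
qed

lemma facet_meets_Qm:
  assumes "F facet_of Q" "F \<noteq> Qp"
  shows "F \<inter> Qm \<noteq> {}"
proof
  assume "F \<inter> Qm = {}"
  then have "F \<subseteq> Qp" using face_subset_Qp facet_of_imp_face_of assms(1) by blast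
  then show False
    using facet_subset_proper_face_eq[OF convex_Q assms(1) facet_of_imp_face_of[OF Qp_facet] Qp_neq_Q]
      assms(2) by blast
qed

lemma facet_meets_Qp:
  assumes "F facet_of Q" "F \<noteq> Qm"
  shows "F \<inter> Qp \<noteq> {}"
proof
  assume "F \<inter> Qp = {}"
  then have "F \<subseteq> Qm" using face_subset_Qm facet_of_imp_face_of assms(1) by blast
  then show False
    using facet_subset_proper_face_eq[OF convex_Q assms(1) facet_of_imp_face_of[OF Qm_facet] Qm_neq_Q]
      assms(2) by blast
qed

text \<open>The lift of a functional c orthogonal to u adds the multiple of u that equalises its
  maxima over the two bases, so the face of Q it exposes is spanned by the faces of the bases
  exposed by c.\<close>
definition lift_coeff :: "'a \<Rightarrow> real" where
  "lift_coeff c = (max_value Qm c - max_value Qp c) / (a - b)"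

definition lift :: "'a \<Rightarrow> 'a" where
  "lift c = c + lift_coeff c *\<^sub>R u"

definition lift_level :: "'a \<Rightarrow> real" where
  "lift_level c = max_value Qp c + lift_coeff c * a"

definition lifted_face :: "'a \<Rightarrow> 'a set" where
  "lifted_face c = convex hull (maximizers Qp c \<union> maximizers Qm c)"

lemma lift_level_lower: "lift_level c = max_value Qm c + lift_coeff c * b"
proof -
  have "lift_coeff c * (a - b) = max_value Qm c - max_value Qp c"
    using levels_distinct by (simp add: lift_coeff_def)
  then show ?thesis by (simp add: lift_level_def algebra_simps)
qed

lemma lift_inner_Qp: "c \<bullet> u = 0 \<Longrightarrow> x \<in> Qp \<Longrightarrow> lift c \<bullet> x = c \<bullet> x + lift_coeff c * a"
  using Qp_level by (simp add: lift_def inner_add_left)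

lemma lift_inner_Qm: "c \<bullet> u = 0 \<Longrightarrow> x \<in> Qm \<Longrightarrow> lift c \<bullet> x = c \<bullet> x + lift_coeff c * b"
  using Qm_level by (simp add: lift_def inner_add_left)

lemma lift_le_level:
  assumes "c \<bullet> u = 0"
  shows "Q \<subseteq> {x. lift c \<bullet> x \<le> lift_level c}"
  unfolding Q_eq_hull_bases
proof (intro hull_minimal convex_halfspace_le subsetI)
  fix x assume "x \<in> Qp \<union> Qm"
  then show "x \<in> {x. lift c \<bullet> x \<le> lift_level c}"
  proof
    assume "x \<in> Qp"
    then show ?thesis using lift_inner_Qp[OF assms] max_value_ge[OF upper.compact upper.nonempty]
      by (simp add: lift_level_def)
  next
    assume "x \<in> Qm"
    then show ?thesis using lift_inner_Qm[OF assms] max_value_ge[OF lower.compact lower.nonempty]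
      by (simp add: lift_level_lower)
  qed
qed

lemma exposed_face_Int_Qp:
  assumes "c \<bullet> u = 0"
  shows "Q \<inter> {x. lift c \<bullet> x = lift_level c} \<inter> Qp = maximizers Qp c"
  using lift_inner_Qp[OF assms] Qp_subset
  by (auto simp: maximizers_iff_max_value[OF upper.compact upper.nonempty] lift_level_def)

lemma exposed_face_Int_Qm:
  assumes "c \<bullet> u = 0"
  shows "Q \<inter> {x. lift c \<bullet> x = lift_level c} \<inter> Qm = maximizers Qm c"
  using lift_inner_Qm[OF assms] Qm_subset
  by (auto simp: maximizers_iff_max_value[OF lower.compact lower.nonempty] lift_level_lower)

lemma exposed_face_of:
  "c \<bullet> u = 0 \<Longrightarrow> Q \<inter> {x. lift c \<bullet> x = lift_level c} face_of Q"
  using lift_le_level by (intro face_of_Int_supporting_hyperplane_le convex_Q) auto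

lemma lifted_face_eq:
  assumes "c \<bullet> u = 0"
  shows "lifted_face c = Q \<inter> {x. lift c \<bullet> x = lift_level c}"
  using face_eq_hull_base_parts[OF exposed_face_of[OF assms]]
    exposed_face_Int_Qp[OF assms] exposed_face_Int_Qm[OF assms]
  by (simp add: lifted_face_def)

lemma lifted_face_face_of: "c \<bullet> u = 0 \<Longrightarrow> lifted_face c face_of Q"
  using lifted_face_eq exposed_face_of by simp

lemma lifted_face_Int_Qp: "c \<bullet> u = 0 \<Longrightarrow> lifted_face c \<inter> Qp = maximizers Qp c"
  using lifted_face_eq exposed_face_Int_Qp by simp

lemma lifted_face_Int_Qm: "c \<bullet> u = 0 \<Longrightarrow> lifted_face c \<inter> Qm = maximizers Qm c"
  using lifted_face_eq exposed_face_Int_Qm by simp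

lemma lift_constant_on_lifted_face:
  "c \<bullet> u = 0 \<Longrightarrow> x \<in> lifted_face c \<Longrightarrow> lift c \<bullet> x = lift_level c"
  using lifted_face_eq by auto

lemma convex_lifted_face: "convex (lifted_face c)"
  by (simp add: lifted_face_def)

lemma lifted_face_subset_iff:
  assumes "c \<bullet> u = 0" "c' \<bullet> u = 0"
  shows "lifted_face c \<subseteq> lifted_face c' \<longleftrightarrow>
         maximizers Qp c \<subseteq> maximizers Qp c' \<and> maximizers Qm c \<subseteq> maximizers Qm c'"
proof
  assume "lifted_face c \<subseteq> lifted_face c'"
  then have "lifted_face c \<inter> Qp \<subseteq> lifted_face c' \<inter> Qp" "lifted_face c \<inter> Qm \<subseteq> lifted_face c' \<inter> Qm"
    by auto
  then show "maximizers Qp c \<subseteq> maximizers Qp c' \<and> maximizers Qm c \<subseteq> maximizers Qm c'"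
    by (simp add: lifted_face_Int_Qp lifted_face_Int_Qm assms)
next
  assume "maximizers Qp c \<subseteq> maximizers Qp c' \<and> maximizers Qm c \<subseteq> maximizers Qm c'"
  then show "lifted_face c \<subseteq> lifted_face c'"
    unfolding lifted_face_def by (intro hull_mono) auto
qed

lemma face_subset_lifted_face:
  assumes "R face_of Q" "R \<inter> Qp \<subseteq> maximizers Qp c" "R \<inter> Qm \<subseteq> maximizers Qm c"
  shows "R \<subseteq> lifted_face c"
proof -
  have "R = convex hull ((R \<inter> Qp) \<union> (R \<inter> Qm))" by (rule face_eq_hull_base_parts[OF assms(1)])
  also have "\<dots> \<subseteq> lifted_face c" unfolding lifted_face_def using assms(2,3) by (intro hull_mono) auto
  finally show ?thesis .
qed

lemma perp_proj_lift: "c \<bullet> u = 0 \<Longrightarrow> perp_proj u (lift c) = c"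
  using perp_proj_add_multiple u_nonzero by (simp add: lift_def)

lemma lifted_face_meets_bases:
  "c \<bullet> u = 0 \<Longrightarrow> lifted_face c \<inter> Qp \<noteq> {} \<and> lifted_face c \<inter> Qm \<noteq> {}"
  using lifted_face_Int_Qp lifted_face_Int_Qm
    maximizers_nonempty[OF upper.compact upper.nonempty] maximizers_nonempty[OF lower.compact lower.nonempty]
  by simp

lemma lifted_face_neq_Q:
  assumes "c \<in> perp_sphere u"
  shows "lifted_face c \<noteq> Q"
proof
  assume "lifted_face c = Q"
  then have "maximizers Qp c = Qp"
    using lifted_face_Int_Qp Qp_subset assms by (auto simp: mem_perp_sphere)
  then show False using upper.maximizers_neq[OF assms] by simp
qed

lemma lifted_face_sgn: "lifted_face (sgn c) = lifted_face c"
  by (simp add: lifted_face_def maximizers_sgn)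

lemma facet_eq_lifted_face_of_normal:
  assumes F: "F facet_of Q" "F \<noteq> Qp" "F \<noteq> Qm"
    and n: "Q \<subseteq> {x. n \<bullet> x \<le> \<beta>}" "F = Q \<inter> {x. n \<bullet> x = \<beta>}"
  shows "perp_proj u n \<noteq> 0" "F = lifted_face (perp_proj u n)"
proof -
  obtain x1 where "x1 \<in> F \<inter> Qp" using facet_meets_Qp[OF F(1,3)] by blast
  then have Fp: "maximizers Qp (perp_proj u n) = F \<inter> Qp"
    using maximizers_perp_proj[of Qp u a n \<beta> x1] Qp_level Qp_subset n by blast
  obtain x2 where "x2 \<in> F \<inter> Qm" using facet_meets_Qm[OF F(1,2)] by blast
  then have Fm: "maximizers Qm (perp_proj u n) = F \<inter> Qm"
    using maximizers_perp_proj[of Qm u b n \<beta> x2] Qm_level Qm_subset n by blast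
  show "F = lifted_face (perp_proj u n)"
    using face_eq_hull_base_parts[OF facet_of_imp_face_of[OF F(1)]] by (simp add: lifted_face_def Fp Fm)
  show "perp_proj u n \<noteq> 0"
  proof
    assume "perp_proj u n = 0"
    then have "Qp \<subseteq> F" using Fp by (auto simp: maximizers_def)
    then show False
      using facet_subset_proper_face_eq[OF convex_Q Qp_facet facet_of_imp_face_of[OF F(1)]]
        facet_of_irrefl F(1,2) by metis
  qed
qed

lemma facet_eq_lifted_face:
  assumes "F facet_of Q" "F \<noteq> Qp" "F \<noteq> Qm"
  shows "\<exists>c\<in>perp_sphere u. F = lifted_face c"
proof -
  obtain n \<beta> where "Q \<subseteq> {x. n \<bullet> x \<le> \<beta>}" "F = Q \<inter> {x. n \<bullet> x = \<beta>}"
    using facet_of_polyhedron[OF polyhedron_Q assms(1)] by blast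
  note n = facet_eq_lifted_face_of_normal[OF assms this]
  then have "sgn (perp_proj u n) \<in> perp_sphere u"
    using sgn_mem_perp_sphere perp_proj_orthogonal u_nonzero by blast
  then show ?thesis using n(2) lifted_face_sgn by metis
qed

text \<open>Both lifts are normals of the same facet of the full-dimensional Q, hence collinear.\<close>
lemma lifted_facet_unique:
  assumes c: "c \<in> perp_sphere u" and facet: "lifted_face c facet_of Q"
    and c': "c' \<in> perp_sphere u" and sub: "lifted_face c \<subseteq> lifted_face c'"
  shows "c' = c"
proof -
  have cu: "c \<bullet> u = 0" "norm c = 1" and cu': "c' \<bullet> u = 0" "norm c' = 1"
    using c c' by (auto simp: mem_perp_sphere)
  have eq: "lifted_face c = lifted_face c'"
    using facet_subset_proper_face_eq[OF convex_Q facet lifted_face_face_of[OF cu'(1)]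
        lifted_face_neq_Q[OF c'] sub] .
  obtain x0 where x0: "x0 \<in> lifted_face c" using facet by (auto simp: facet_of_def)
  have "lift c \<noteq> 0"
  proof
    assume "lift c = 0"
    then have "c = perp_proj u 0" using perp_proj_lift[OF cu(1)] by simp
    then show False using cu(2) by (simp add: perp_proj_def)
  qed
  moreover have "aff_dim (lifted_face c) + 1 = int (dim (UNIV :: 'a set))"
    using facet full_dim by (simp add: facet_of_def)
  moreover have "\<forall>z\<in>lifted_face c. lift d \<bullet> z = lift d \<bullet> x0" if "d = c \<or> d = c'" for d
    using lift_constant_on_lifted_face cu(1) cu'(1) x0 eq that by auto
  ultimately have "lift c' \<in> span {lift c}"
    using constant_functionals_collinear[OF x0 subspace_UNIV, of "lift c" "lift c'"] by simp
  then obtain l where "lift c' = l *\<^sub>R lift c" by (auto simp: span_singleton)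
  then have "c' = l *\<^sub>R c"
    using perp_proj_lift cu(1) cu'(1) linear_cmul[OF linear_perp_proj] by metis
  then consider "c' = c" | "c' = - c"
    using unit_multiple_cases[OF cu(2) cu'(2)] by (auto simp: span_singleton)
  then show ?thesis
  proof cases
    case 2
    then have "maximizers Qp c \<subseteq> maximizers Qp (- c)"
      using lifted_face_subset_iff[OF cu(1) cu'(1)] sub by simp
    moreover obtain y where "y \<in> maximizers Qp c"
      using maximizers_nonempty[OF upper.compact upper.nonempty] by blast
    ultimately have "c = 0" using upper.antipodal_maximizer_eq_0 cu(1) by blast
    then show ?thesis using cu(2) by simp
  qed
qed

lemma lifted_face_facet_iff:
  assumes c: "c \<in> perp_sphere u"
  shows "lifted_face c facet_of Q \<longleftrightarrow>
         {c'\<in>perp_sphere u. lifted_face c \<subseteq> lifted_face c'} = {c}"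
proof
  assume "lifted_face c facet_of Q"
  then show "{c'\<in>perp_sphere u. lifted_face c \<subseteq> lifted_face c'} = {c}"
    using lifted_facet_unique c by blast
next
  assume unique: "{c'\<in>perp_sphere u. lifted_face c \<subseteq> lifted_face c'} = {c}"
  show "lifted_face c facet_of Q"
  proof (rule ccontr)
    assume "\<not> lifted_face c facet_of Q"
    have cu: "c \<bullet> u = 0" using c by (simp add: mem_perp_sphere)
    have "lifted_face c \<noteq> {}" "Q \<noteq> UNIV"
      using lifted_face_meets_bases[OF cu] compact_Q compact_imp_bounded not_bounded_UNIV by auto
    then obtain G1 G2 where G: "G1 facet_of Q" "G2 facet_of Q" "G1 \<noteq> G2"
      "lifted_face c \<subseteq> G1" "lifted_face c \<subseteq> G2"
      using face_of_polyhedron_two_facets[OF polyhedron_Q lifted_face_face_of[OF cu] _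
          lifted_face_neq_Q[OF c] \<open>\<not> lifted_face c facet_of Q\<close>] by blast
    have "G \<noteq> Qp \<and> G \<noteq> Qm" if "lifted_face c \<subseteq> G" for G
      using that lifted_face_meets_bases[OF cu] bases_disjoint by blast
    then obtain c1 c2 where "c1 \<in> perp_sphere u" "G1 = lifted_face c1"
      "c2 \<in> perp_sphere u" "G2 = lifted_face c2"
      using facet_eq_lifted_face G by meson
    moreover from this have "c1 = c" "c2 = c" using unique G(4,5) by blast+
    ultimately show False using G(3) by simp
  qed
qed

abbreviation refinement :: "'a set set" where
  "refinement \<equiv> common_refinement (geodesic_map {c. c \<bullet> u = 0} Qp) (geodesic_map {c. c \<bullet> u = 0} Qm)"

lemma refinement_cell_iff:
  "E \<in> refinement \<longleftrightarrow> E \<noteq> {} \<and>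
     (\<exists>F1 F2. F1 face_of Qp \<and> F1 \<noteq> {} \<and> F2 face_of Qm \<and> F2 \<noteq> {} \<and>
        E = {c\<in>perp_sphere u. F1 \<subseteq> maximizers Qp c \<and> F2 \<subseteq> maximizers Qm c})"
proof
  assume "E \<in> refinement"
  then obtain C D where "E = C \<inter> D" "C \<inter> D \<noteq> {}"
    "C \<in> geodesic_map {c. c \<bullet> u = 0} Qp" "D \<in> geodesic_map {c. c \<bullet> u = 0} Qm"
    by (auto simp: common_refinement_def)
  then show "E \<noteq> {} \<and> (\<exists>F1 F2. F1 face_of Qp \<and> F1 \<noteq> {} \<and> F2 face_of Qm \<and> F2 \<noteq> {} \<and>
      E = {c\<in>perp_sphere u. F1 \<subseteq> maximizers Qp c \<and> F2 \<subseteq> maximizers Qm c})"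
    unfolding geodesic_map_iff by blast
next
  assume "E \<noteq> {} \<and> (\<exists>F1 F2. F1 face_of Qp \<and> F1 \<noteq> {} \<and> F2 face_of Qm \<and> F2 \<noteq> {} \<and>
      E = {c\<in>perp_sphere u. F1 \<subseteq> maximizers Qp c \<and> F2 \<subseteq> maximizers Qm c})"
  then obtain F1 F2 where F: "F1 face_of Qp" "F1 \<noteq> {}" "F2 face_of Qm" "F2 \<noteq> {}"
    and E: "E = {c\<in>perp_sphere u. F1 \<subseteq> maximizers Qp c} \<inter> {c\<in>perp_sphere u. F2 \<subseteq> maximizers Qm c}"
      "E \<noteq> {}"
    by blast
  then have "{c\<in>perp_sphere u. F1 \<subseteq> maximizers Qp c} \<in> geodesic_map {c. c \<bullet> u = 0} Qp"
    "{c\<in>perp_sphere u. F2 \<subseteq> maximizers Qm c} \<in> geodesic_map {c. c \<bullet> u = 0} Qm"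
    unfolding geodesic_map_iff by blast+
  then show "E \<in> refinement" using E unfolding common_refinement_def by blast
qed

lemma refinement_vertex_iff:
  "c \<in> map_vertices refinement \<longleftrightarrow> c \<in> perp_sphere u \<and> lifted_face c facet_of Q"
proof
  assume "c \<in> map_vertices refinement"
  then obtain F1 F2 where cell: "{c} = {c'\<in>perp_sphere u. F1 \<subseteq> maximizers Qp c' \<and> F2 \<subseteq> maximizers Qm c'}"
    unfolding map_vertices_def mem_Collect_eq refinement_cell_iff by blast
  then have c: "c \<in> perp_sphere u" "F1 \<subseteq> maximizers Qp c" "F2 \<subseteq> maximizers Qm c" by auto
  have "{c'\<in>perp_sphere u. lifted_face c \<subseteq> lifted_face c'} = {c}"
  proof (intro equalityI subsetI)
    fix c' assume "c' \<in> {c'\<in>perp_sphere u. lifted_face c \<subseteq> lifted_face c'}"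
    then have "c' \<in> perp_sphere u" "maximizers Qp c \<subseteq> maximizers Qp c'" "maximizers Qm c \<subseteq> maximizers Qm c'"
      using lifted_face_subset_iff c(1) by (auto simp: mem_perp_sphere)
    then show "c' \<in> {c}" using cell c(2,3) by blast
  qed (use c(1) in simp)
  then show "c \<in> perp_sphere u \<and> lifted_face c facet_of Q"
    using lifted_face_facet_iff c(1) by blast
next
  assume c: "c \<in> perp_sphere u \<and> lifted_face c facet_of Q"
  then have unique: "{c'\<in>perp_sphere u. lifted_face c \<subseteq> lifted_face c'} = {c}"
    using lifted_face_facet_iff by blast
  have cell: "{c} = {c'\<in>perp_sphere u. maximizers Qp c \<subseteq> maximizers Qp c' \<and> maximizers Qm c \<subseteq> maximizers Qm c'}"
  proof (intro equalityI subsetI)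
    fix c' assume "c' \<in> {c'\<in>perp_sphere u. maximizers Qp c \<subseteq> maximizers Qp c' \<and> maximizers Qm c \<subseteq> maximizers Qm c'}"
    then have "c' \<in> {c'\<in>perp_sphere u. lifted_face c \<subseteq> lifted_face c'}"
      using lifted_face_subset_iff c by (auto simp: mem_perp_sphere)
    then show "c' \<in> {c}" using unique by blast
  qed (use c in simp)
  show "c \<in> map_vertices refinement"
    unfolding map_vertices_def mem_Collect_eq refinement_cell_iff
    by (rule conjI, simp, rule exI[of _ "maximizers Qp c"], rule exI[of _ "maximizers Qm c"])
      (simp add: cell[symmetric] maximizers_face_of upper.convex lower.convex
        maximizers_nonempty upper.compact upper.nonempty lower.compact lower.nonempty)
qed

lemma ridge_meets_bases:
  assumes v: "v \<in> perp_sphere u" and w: "w \<in> perp_sphere u" and "v \<noteq> w"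
    and R: "ridge_of R Q" "R \<subseteq> lifted_face v" "R \<subseteq> lifted_face w"
  shows "R \<inter> Qp \<noteq> {}" "R \<inter> Qm \<noteq> {}"
proof -
  have vu: "v \<bullet> u = 0" and wu: "w \<bullet> u = 0" using v w by (auto simp: mem_perp_sphere)
  have RQ: "R face_of Q" "R \<noteq> {}" "aff_dim R = int DIM('a) - 2"
    using R(1) full_dim by (auto simp: ridge_of_def)
  show "R \<inter> Qp \<noteq> {}"
  proof
    assume "R \<inter> Qp = {}"
    then have "R \<subseteq> Qm" using face_subset_Qm RQ(1) by blast
    then have "R facet_of Qm" "R \<subseteq> maximizers Qm v" "R \<subseteq> maximizers Qm w"
      using face_of_subset[OF RQ(1) _ Qm_subset] RQ Qm_facet full_dim R(2,3)
        lifted_face_Int_Qm[OF vu] lifted_face_Int_Qm[OF wu] by (auto simp: facet_of_def)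
    then show False using lower.facet_normal_unique v w \<open>v \<noteq> w\<close> by metis
  qed
  show "R \<inter> Qm \<noteq> {}"
  proof
    assume "R \<inter> Qm = {}"
    then have "R \<subseteq> Qp" using face_subset_Qp RQ(1) by blast
    then have "R facet_of Qp" "R \<subseteq> maximizers Qp v" "R \<subseteq> maximizers Qp w"
      using face_of_subset[OF RQ(1) _ Qp_subset] RQ Qp_facet full_dim R(2,3)
        lifted_face_Int_Qp[OF vu] lifted_face_Int_Qp[OF wu] by (auto simp: facet_of_def)
    then show False using upper.facet_normal_unique v w \<open>v \<noteq> w\<close> by metis
  qed
qed

text \<open>The lifts of the directions whose lifted faces contain a ridge are normals of the ridge,
  which form a plane, and they project back onto these directions.\<close>
lemma dim_directions_of_ridge:
  assumes "ridge_of R Q"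
  shows "dim {c\<in>perp_sphere u. R \<subseteq> lifted_face c} \<le> 2"
proof -
  obtain x0 where x0: "x0 \<in> R" using assms by (auto simp: ridge_of_def)
  define W where "W = {n. \<forall>x\<in>R. n \<bullet> x = n \<bullet> x0}"
  have "int (dim W) = 2"
    using dim_normals_eq[OF x0] assms full_dim by (simp add: W_def ridge_of_def)
  have "{c\<in>perp_sphere u. R \<subseteq> lifted_face c} \<subseteq> perp_proj u ` W"
  proof
    fix c assume c: "c \<in> {c\<in>perp_sphere u. R \<subseteq> lifted_face c}"
    then have cu: "c \<bullet> u = 0" by (simp add: mem_perp_sphere)
    then have "lift c \<bullet> x = lift_level c" if "x \<in> R" for x
      using c that lift_constant_on_lifted_face[OF cu] by blast
    then have "lift c \<in> W" using x0 by (simp add: W_def)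
    then show "c \<in> perp_proj u ` W" using perp_proj_lift[OF cu] by force
  qed
  then have "dim {c\<in>perp_sphere u. R \<subseteq> lifted_face c} \<le> dim (perp_proj u ` W)"
    by (rule dim_subset)
  also have "\<dots> \<le> dim W" by (rule dim_image_le[OF linear_perp_proj])
  finally show ?thesis using \<open>int (dim W) = 2\<close> by simp
qed

lemma shares_ridge_imp_adjacent:
  assumes v: "v \<in> perp_sphere u" "lifted_face v facet_of Q"
    and w: "w \<in> perp_sphere u" "lifted_face w facet_of Q" and "v \<noteq> w"
    and "shares_ridge Q (lifted_face v) (lifted_face w)"
  shows "map_adjacent refinement v w"
proof -
  obtain R where R: "ridge_of R Q" "R \<subseteq> lifted_face v" "R \<subseteq> lifted_face w"
    using assms(6) by (auto simp: shares_ridge_def)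
  have vu: "v \<bullet> u = 0" and wu: "w \<bullet> u = 0" using v w by (auto simp: mem_perp_sphere)
  define F1 where "F1 = maximizers Qp v \<inter> maximizers Qp w"
  define F2 where "F2 = maximizers Qm v \<inter> maximizers Qm w"
  define E where "E = {c\<in>perp_sphere u. F1 \<subseteq> maximizers Qp c \<and> F2 \<subseteq> maximizers Qm c}"
  have RF: "R \<inter> Qp \<subseteq> F1" "R \<inter> Qm \<subseteq> F2"
    using R(2,3) lifted_face_Int_Qp[OF vu] lifted_face_Int_Qp[OF wu]
      lifted_face_Int_Qm[OF vu] lifted_face_Int_Qm[OF wu] by (auto simp: F1_def F2_def)
  then have "F1 \<noteq> {}" "F2 \<noteq> {}" using ridge_meets_bases[OF v(1) w(1) \<open>v \<noteq> w\<close> R] by auto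
  moreover have "F1 face_of Qp" "F2 face_of Qm"
    unfolding F1_def F2_def
    by (intro face_of_Int maximizers_face_of upper.convex lower.convex)+
  moreover have "v \<in> E" "w \<in> E" using v w by (auto simp: E_def F1_def F2_def)
  ultimately have "E \<in> refinement" unfolding refinement_cell_iff E_def by blast
  have "dim {v, w} = 2"
    using upper.dim_pair_common_maximizer[OF v(1) w(1) \<open>v \<noteq> w\<close>] \<open>F1 \<noteq> {}\<close> by (auto simp: F1_def)
  moreover have "dim {v, w} \<le> dim E" using \<open>v \<in> E\<close> \<open>w \<in> E\<close> by (intro dim_subset) auto
  moreover have "E \<subseteq> {c\<in>perp_sphere u. R \<subseteq> lifted_face c}"
  proof
    fix c assume "c \<in> E"
    then have "R \<subseteq> lifted_face c"
      using face_subset_lifted_face[of R c] R(1) RF by (auto simp: E_def ridge_of_def)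
    then show "c \<in> {c\<in>perp_sphere u. R \<subseteq> lifted_face c}" using \<open>c \<in> E\<close> by (simp add: E_def)
  qed
  then have "dim E \<le> 2" using dim_directions_of_ridge[OF R(1)] dim_subset le_trans by blast
  ultimately have "E \<in> map_edges refinement" using \<open>E \<in> refinement\<close> by (simp add: map_edges_def)
  then show ?thesis
    using refinement_vertex_iff v w \<open>v \<in> E\<close> \<open>w \<in> E\<close> by (auto simp: map_adjacent_def)
qed

lemma facet_normal_proj_in_span_cell:
  assumes F: "F1 \<subseteq> Qp" "F2 \<subseteq> Qm" "F1 \<noteq> {}" "F2 \<noteq> {}"
    and G: "Q \<subseteq> {x. n \<bullet> x \<le> \<beta>}" "Q \<inter> {x. n \<bullet> x = \<beta>} facet_of Q"
      "F1 \<union> F2 \<subseteq> Q \<inter> {x. n \<bullet> x = \<beta>}"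
  shows "perp_proj u n \<in> span {c\<in>perp_sphere u. F1 \<subseteq> maximizers Qp c \<and> F2 \<subseteq> maximizers Qm c}"
proof -
  let ?G = "Q \<inter> {x. n \<bullet> x = \<beta>}" and ?p = "perp_proj u n"
  have "?G \<noteq> Qp" "?G \<noteq> Qm" using F G(3) bases_disjoint by blast+
  note p = facet_eq_lifted_face_of_normal[OF G(2) this G(1) refl]
  have pu: "?p \<bullet> u = 0" using perp_proj_orthogonal u_nonzero by blast
  have "F1 \<subseteq> maximizers Qp (sgn ?p)" "F2 \<subseteq> maximizers Qm (sgn ?p)"
    using F G(3) lifted_face_Int_Qp[OF pu] lifted_face_Int_Qm[OF pu] p(2) maximizers_sgn by blast+
  then have "sgn ?p \<in> {c\<in>perp_sphere u. F1 \<subseteq> maximizers Qp c \<and> F2 \<subseteq> maximizers Qm c}"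
    using sgn_mem_perp_sphere[OF pu p(1)] by blast
  moreover have "?p = norm ?p *\<^sub>R sgn ?p" using p(1) by (simp add: sgn_div_norm)
  ultimately show ?thesis by (metis span_base span_mul)
qed

lemma aff_dim_Int_lifted_facets_lt:
  assumes v: "v \<in> perp_sphere u" "lifted_face v facet_of Q" and w: "w \<in> perp_sphere u" "v \<noteq> w"
  shows "aff_dim (lifted_face v \<inter> lifted_face w) < int DIM('a) - 1"
proof -
  let ?R = "lifted_face v \<inter> lifted_face w"
  have vu: "v \<bullet> u = 0" and wu: "w \<bullet> u = 0" using v w by (auto simp: mem_perp_sphere)
  have "?R \<noteq> lifted_face v"
  proof
    assume "?R = lifted_face v"
    then have "lifted_face v \<subseteq> lifted_face w" by blast
    then show False using lifted_facet_unique[OF v w(1)] w(2) by blast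
  qed
  moreover have "?R face_of lifted_face v"
    using face_of_subset[OF face_of_Int[OF lifted_face_face_of[OF vu] lifted_face_face_of[OF wu]]]
      face_of_imp_subset[OF lifted_face_face_of[OF vu]] by blast
  ultimately have "aff_dim ?R < aff_dim (lifted_face v)"
    using face_of_aff_dim_lt[OF convex_lifted_face] by blast
  then show ?thesis using v(2) full_dim by (simp add: facet_of_def)
qed

lemma adjacent_imp_shares_ridge:
  assumes "map_adjacent refinement v w" "v \<noteq> w"
  shows "shares_ridge Q (lifted_face v) (lifted_face w)"
proof -
  obtain E where E: "E \<in> map_edges refinement" "v \<in> E" "w \<in> E"
    using assms(1) by (auto simp: map_adjacent_def)
  have v': "v \<in> perp_sphere u" "lifted_face v facet_of Q" and w': "w \<in> perp_sphere u"
    using assms(1) refinement_vertex_iff by (auto simp: map_adjacent_def)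
  then have vu: "v \<bullet> u = 0" and wu: "w \<bullet> u = 0" by (auto simp: mem_perp_sphere)
  obtain F1 F2 where F: "F1 face_of Qp" "F1 \<noteq> {}" "F2 face_of Qm" "F2 \<noteq> {}"
    and E_eq: "E = {c\<in>perp_sphere u. F1 \<subseteq> maximizers Qp c \<and> F2 \<subseteq> maximizers Qm c}"
    using E(1) unfolding map_edges_def mem_Collect_eq refinement_cell_iff by blast
  have F_sub: "F1 \<subseteq> Qp" "F2 \<subseteq> Qm" using F face_of_imp_subset by blast+
  define R where "R = lifted_face v \<inter> lifted_face w"
  have R_face: "R face_of Q" using lifted_face_face_of vu wu by (simp add: R_def face_of_Int)
  have F_R: "F1 \<union> F2 \<subseteq> R"
    using E(2,3) E_eq lifted_face_Int_Qp[OF vu] lifted_face_Int_Qp[OF wu]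
      lifted_face_Int_Qm[OF vu] lifted_face_Int_Qm[OF wu] by (auto simp: R_def)
  have "aff_dim R < int DIM('a) - 1"
    using aff_dim_Int_lifted_facets_lt[OF v' w' assms(2)] by (simp add: R_def)
  then have "R \<noteq> Q" "R \<noteq> {}" using full_dim F_R F(2) by auto
  then obtain X where X: "\<And>n. n \<in> X \<Longrightarrow> \<exists>\<beta>. Q \<subseteq> {x. n \<bullet> x \<le> \<beta>} \<and>
        Q \<inter> {x. n \<bullet> x = \<beta>} facet_of Q \<and> R \<subseteq> Q \<inter> {x. n \<bullet> x = \<beta>}"
    and dim_R: "int DIM('a) - int (dim X) \<le> aff_dim R"
    using face_aff_dim_ge_facet_normals[OF polyhedron_Q full_dim R_face] by blast
  obtain xp xm where xp: "xp \<in> F1" and xm: "xm \<in> F2" using F by blast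
  have "u \<bullet> xp = a" "u \<bullet> xm = b" using xp xm F_sub Qp_level Qm_level by blast+
  then have "u \<bullet> (xp - xm) \<noteq> 0" using levels_distinct by (simp add: inner_diff_right)
  moreover have "\<forall>n\<in>X. n \<bullet> (xp - xm) = 0"
  proof
    fix n assume "n \<in> X"
    then obtain \<beta> where "R \<subseteq> Q \<inter> {x. n \<bullet> x = \<beta>}" using X by blast
    then show "n \<bullet> (xp - xm) = 0" using xp xm F_R by (auto simp: inner_diff_right)
  qed
  ultimately have "dim X = dim (perp_proj u ` X)" by (simp add: dim_perp_proj_image)
  also have "\<dots> \<le> dim (span E)"
  proof (rule dim_subset, rule image_subsetI)
    fix n assume "n \<in> X"
    then obtain \<beta> where G: "Q \<subseteq> {x. n \<bullet> x \<le> \<beta>}" "Q \<inter> {x. n \<bullet> x = \<beta>} facet_of Q"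
      "R \<subseteq> Q \<inter> {x. n \<bullet> x = \<beta>}" using X by blast
    then have "F1 \<union> F2 \<subseteq> Q \<inter> {x. n \<bullet> x = \<beta>}" using F_R by blast
    then show "perp_proj u n \<in> span E"
      unfolding E_eq using facet_normal_proj_in_span_cell[OF F_sub F(2,4) G(1,2)] by blast
  qed
  also have "\<dots> = 2" using E(1) by (simp add: map_edges_def)
  finally have "ridge_of R Q"
    using R_face F_R F(2) dim_R \<open>aff_dim R < int DIM('a) - 1\<close> full_dim by (auto simp: ridge_of_def)
  then show ?thesis by (auto simp: R_def shares_ridge_def)
qed

lemma upper_vertex_iff_shares_ridge:
  assumes c: "c \<in> perp_sphere u"
  shows "c \<in> map_vertices (geodesic_map {c. c \<bullet> u = 0} Qp) \<longleftrightarrow> shares_ridge Q Qp (lifted_face c)"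
proof -
  have cu: "c \<bullet> u = 0" using c by (simp add: mem_perp_sphere)
  have face: "maximizers Qp c face_of Qp" "maximizers Qp c \<noteq> {}"
    using maximizers_face_of[OF upper.convex] maximizers_nonempty[OF upper.compact upper.nonempty] .
  have "maximizers Qp c facet_of Qp \<longleftrightarrow> shares_ridge Q Qp (lifted_face c)"
  proof
    assume "maximizers Qp c facet_of Qp"
    then show "shares_ridge Q Qp (lifted_face c)"
      using facet_of_facet_iff_ridge[OF Qp_facet face] lifted_face_Int_Qp[OF cu]
      unfolding shares_ridge_def by blast
  next
    assume "shares_ridge Q Qp (lifted_face c)"
    then obtain R where "ridge_of R Q" "R \<subseteq> maximizers Qp c"
      using lifted_face_Int_Qp[OF cu] unfolding shares_ridge_def by blast
    then show "maximizers Qp c facet_of Qp"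
      using ridge_subset_face_of_facet[OF Qp_facet face(1) upper.maximizers_neq[OF c]] by blast
  qed
  then show ?thesis using upper.geodesic_map_vertex_iff c by blast
qed

lemma lower_vertex_iff_shares_ridge:
  assumes c: "c \<in> perp_sphere u"
  shows "c \<in> map_vertices (geodesic_map {c. c \<bullet> u = 0} Qm) \<longleftrightarrow> shares_ridge Q (lifted_face c) Qm"
proof -
  have cu: "c \<bullet> u = 0" using c by (simp add: mem_perp_sphere)
  have face: "maximizers Qm c face_of Qm" "maximizers Qm c \<noteq> {}"
    using maximizers_face_of[OF lower.convex] maximizers_nonempty[OF lower.compact lower.nonempty] .
  have "maximizers Qm c facet_of Qm \<longleftrightarrow> shares_ridge Q (lifted_face c) Qm"
  proof
    assume "maximizers Qm c facet_of Qm"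
    then show "shares_ridge Q (lifted_face c) Qm"
      using facet_of_facet_iff_ridge[OF Qm_facet face] lifted_face_Int_Qm[OF cu]
      unfolding shares_ridge_def by blast
  next
    assume "shares_ridge Q (lifted_face c) Qm"
    then obtain R where "ridge_of R Q" "R \<subseteq> maximizers Qm c"
      using lifted_face_Int_Qm[OF cu] unfolding shares_ridge_def by blast
    then show "maximizers Qm c facet_of Qm"
      using ridge_subset_face_of_facet[OF Qm_facet face(1) lower.maximizers_neq[OF c]] by blast
  qed
  then show ?thesis using lower.geodesic_map_vertex_iff c by blast
qed

text \<open>Strictly between the two bases, a shortest walk only visits facets other than Qp and Qm,
  and these are lifted faces.\<close>
lemma shortest_facet_walk_lifted:
  assumes sw: "shortest_walk {Qp} {Qm} {F. F facet_of Q} (shares_ridge Q) k Fs"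
  obtains p where "k \<ge> 2" "\<And>j. j \<le> k - 2 \<Longrightarrow> p j \<in> perp_sphere u \<and> Fs (Suc j) = lifted_face (p j)"
proof -
  from sw have ends: "Fs 0 = Qp" "Fs k = Qm" and facets: "\<And>i. i \<le> k \<Longrightarrow> Fs i facet_of Q"
    and steps: "\<And>i. i < k \<Longrightarrow> shares_ridge Q (Fs i) (Fs (Suc i))"
    by (auto simp: shortest_walk_def walk_def)
  have "k \<noteq> 0" using ends bases_distinct by auto
  moreover have "k \<noteq> 1"
    using steps[of 0] ends bases_disjoint by (auto simp: shares_ridge_def ridge_of_def)
  ultimately have "k \<ge> 2" by linarith
  have "\<exists>c. c \<in> perp_sphere u \<and> Fs (Suc j) = lifted_face c" if "j \<le> k - 2" for j
  proof -
    have j: "Suc j < k" "0 < Suc j" "Suc j \<le> k" using that \<open>k \<ge> 2\<close> by auto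
    then have "Fs (Suc j) \<noteq> Qm" "Fs (Suc j) \<noteq> Qp"
      using shortest_walk_avoids_target[OF sw j(1)] shortest_walk_avoids_source[OF sw j(2,3)] by auto
    then show ?thesis using facet_eq_lifted_face facets[OF j(3)] by blast
  qed
  then show ?thesis using that \<open>k \<ge> 2\<close> by metis
qed

lemma facet_reach_imp_map_reach:
  assumes "facet_reach Q Qp Qm n"
  shows "map_reach refinement (map_vertices (geodesic_map {c. c \<bullet> u = 0} Qp))
           (map_vertices (geodesic_map {c. c \<bullet> u = 0} Qm)) (n - 2)"
proof -
  obtain k0 Fs0 where "k0 \<le> n" and "walk {Qp} {Qm} {F. F facet_of Q} (shares_ridge Q) k0 Fs0"
    using assms by (auto simp: facet_reach_iff_walk)
  moreover from this(2) obtain k Fs where "k \<le> k0"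
    and sw: "shortest_walk {Qp} {Qm} {F. F facet_of Q} (shares_ridge Q) k Fs"
    by (rule shortest_walk_exists)
  ultimately have "k \<le> n" by simp
  from sw have ends: "Fs 0 = Qp" "Fs k = Qm" and facets: "\<And>i. i \<le> k \<Longrightarrow> Fs i facet_of Q"
    and steps: "\<And>i. i < k \<Longrightarrow> shares_ridge Q (Fs i) (Fs (Suc i))"
    by (auto simp: shortest_walk_def walk_def)
  obtain p where "k \<ge> 2"
    and p: "\<And>j. j \<le> k - 2 \<Longrightarrow> p j \<in> perp_sphere u \<and> Fs (Suc j) = lifted_face (p j)"
    using shortest_facet_walk_lifted[OF sw] by blast
  have "walk (map_vertices (geodesic_map {c. c \<bullet> u = 0} Qp)) (map_vertices (geodesic_map {c. c \<bullet> u = 0} Qm))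
      (map_vertices refinement) (map_adjacent refinement) (k - 2) p"
    unfolding walk_def
  proof (intro conjI allI impI)
    show "p 0 \<in> map_vertices (geodesic_map {c. c \<bullet> u = 0} Qp)"
      using upper_vertex_iff_shares_ridge p[of 0] steps[of 0] ends \<open>k \<ge> 2\<close> by auto
    have "Suc (k - 2) = k - 1" "Suc (k - 1) = k" using \<open>k \<ge> 2\<close> by auto
    then show "p (k - 2) \<in> map_vertices (geodesic_map {c. c \<bullet> u = 0} Qm)"
      using lower_vertex_iff_shares_ridge p[of "k - 2"] steps[of "k - 1"] ends by auto
    show "p i \<in> map_vertices refinement" if "i \<le> k - 2" for i
      using refinement_vertex_iff p[OF that] facets[of "Suc i"] that \<open>k \<ge> 2\<close> by auto
    show "map_adjacent refinement (p i) (p (Suc i))" if "i < k - 2" for i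
    proof -
      have i: "i \<le> k - 2" "Suc i \<le> k - 2" "Suc i < k" using that by auto
      have "Fs (Suc i) \<noteq> Fs (Suc (Suc i))" using shortest_walk_steps_distinct[OF sw i(3)] .
      then have "p i \<noteq> p (Suc i)" using p[OF i(1)] p[OF i(2)] by auto
      moreover have "lifted_face (p i) facet_of Q" "lifted_face (p (Suc i)) facet_of Q"
        using facets[of "Suc i"] facets[of "Suc (Suc i)"] p[OF i(1)] p[OF i(2)] i by auto
      ultimately show ?thesis
        using shares_ridge_imp_adjacent steps[OF i(3)] p[OF i(1)] p[OF i(2)] by auto
    qed
  qed
  moreover have "k - 2 \<le> n - 2" using \<open>k \<le> n\<close> by simp
  ultimately show ?thesis unfolding map_reach_iff_walk by blast
qed

lemma map_reach_imp_facet_reach: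
  assumes "map_reach refinement (map_vertices (geodesic_map {c. c \<bullet> u = 0} Qp))
             (map_vertices (geodesic_map {c. c \<bullet> u = 0} Qm)) n"
  shows "facet_reach Q Qp Qm (n + 2)"
proof -
  let ?A = "map_vertices (geodesic_map {c. c \<bullet> u = 0} Qp)"
    and ?B = "map_vertices (geodesic_map {c. c \<bullet> u = 0} Qm)"
  obtain k0 p0 where "k0 \<le> n" and "walk ?A ?B (map_vertices refinement) (map_adjacent refinement) k0 p0"
    using assms by (auto simp: map_reach_iff_walk)
  moreover from this(2) obtain k p where "k \<le> k0"
    and sw: "shortest_walk ?A ?B (map_vertices refinement) (map_adjacent refinement) k p"
    by (rule shortest_walk_exists)
  ultimately have "k \<le> n" by simp
  from sw have ends: "p 0 \<in> ?A" "p k \<in> ?B" and vertices: "\<And>i. i \<le> k \<Longrightarrow> p i \<in> map_vertices refinement"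
    and steps: "\<And>i. i < k \<Longrightarrow> map_adjacent refinement (p i) (p (Suc i))"
    by (auto simp: shortest_walk_def walk_def)
  have facet: "p i \<in> perp_sphere u \<and> lifted_face (p i) facet_of Q" if "i \<le> k" for i
    using refinement_vertex_iff vertices[OF that] by blast
  define Fs where "Fs j = (if j = 0 then Qp else if j \<le> k + 1 then lifted_face (p (j - 1)) else Qm)" for j
  have "walk {Qp} {Qm} {F. F facet_of Q} (shares_ridge Q) (k + 2) Fs"
    unfolding walk_def
  proof (intro conjI allI impI)
    show "Fs 0 \<in> {Qp}" "Fs (k + 2) \<in> {Qm}" by (simp_all add: Fs_def)
    show "Fs i \<in> {F. F facet_of Q}" if "i \<le> k + 2" for i
    proof (cases "i = 0 \<or> k + 1 < i")
      case False
      then have "i - 1 \<le> k" by linarith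
      then show ?thesis using False facet[of "i - 1"] by (simp add: Fs_def)
    qed (use Qp_facet Qm_facet in \<open>auto simp: Fs_def\<close>)
    show "shares_ridge Q (Fs i) (Fs (Suc i))" if i: "i < k + 2" for i
    proof -
      consider "i = 0" | "0 < i" "i \<le> k" | "i = k + 1" using i by linarith
      then show ?thesis
      proof cases
        case 1
        then show ?thesis using upper_vertex_iff_shares_ridge ends(1) facet[of 0] by (simp add: Fs_def)
      next
        case 2
        then have i: "i - 1 < k" "Suc (i - 1) = i" by auto
        then have "shares_ridge Q (lifted_face (p (i - 1))) (lifted_face (p i))"
          using adjacent_imp_shares_ridge steps[OF i(1)] shortest_walk_steps_distinct[OF sw i(1)] by simp
        then show ?thesis using 2 by (simp add: Fs_def)
      next
        case 3
        then show ?thesis using lower_vertex_iff_shares_ridge ends(2) facet[of k] by (simp add: Fs_def)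
      qed
    qed
  qed
  moreover have "k + 2 \<le> n + 2" using \<open>k \<le> n\<close> by simp
  ultimately show ?thesis unfolding facet_reach_iff_walk by blast
qed

end

theorem mainTheorem5:
  fixes Q Qp Qm :: "'a::euclidean_space set" and u :: 'a and a b :: real
  assumes "DIM('a) \<ge> 2"
    and "aff_dim Q = int DIM('a)"
    and "prismatoid Q Qp Qm u a b"
  defines "L \<equiv> {c::'a. c \<bullet> u = 0}"
  shows "facet_reach Q Qp Qm DIM('a) \<longleftrightarrow>
         map_reach (common_refinement (geodesic_map L Qp) (geodesic_map L Qm))
                   (map_vertices (geodesic_map L Qp)) (map_vertices (geodesic_map L Qm))
                   (DIM('a) - 2)"
proof -
  interpret full_prismatoid Q Qp Qm u a b
    using assms(2,3) by unfold_locales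
  show ?thesis
    unfolding L_def
    using facet_reach_imp_map_reach map_reach_imp_facet_reach[of "DIM('a) - 2"] assms(1)
    by (metis le_add_diff_inverse2)
qed

end
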